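(* Let $\mathcal{D}=(V,\Phi)$ be a finite directed graph with adjacency matrix $M\in\{0,1\}^{V\times V}$ ($M_{vw}=1$ iff $(v,w)\in\Phi$). Let $\boldsymbol{\alpha}(t),\boldsymbol{\beta}(t)\in[0,+\infty)^V$ ($t\ge0$) be vector sequences such that $\boldsymbol{\alpha}(t)$ is non-decreasing in every component and $\boldsymbol{\beta}(t)$ is convergent, and let $\mathbf{r},\mathbf{s}\in(0,+\infty)^V$ with $r_v=s_v^{-1}$ for all $v$. Set $W_{vw}=r_vM_{vw}s_w$. Define $\boldsymbol{\omega}(t),\boldsymbol{\eta}(t)$ by $\boldsymbol{\omega}(0)=\boldsymbol{\eta}(0)=\mathbf{1}$ and, for all $v\in V$, $t\ge0$, $$\omega_v(t+1)=\frac{1}{1+\alpha_v(t)+\sum_{w}W_{vw}(1-\omega_w(t))},\qquad \eta_v(t+1)=1+\beta_v(t)+\sum_w M_{vw}\,\omega_w(t)\,\eta_w(t).$$ If $\mathcal{D}$ is strongly connected and there exists $v\in V$ such that the sequence $\alpha_v(t)$ is not identically zero, then the sequences $\boldsymbol{\omega}(t)$ and $\boldsymbol{\eta}(t)$ converge. Moreover, for every $u\in V$ the sequence $\omega_u(t)$ is non-increasing and its limit satisfies $\omega_u(\infty)<1$.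
   Context: $\mathcal{D}$ is strongly connected if for every pair $v,w\in V$ there is a directed path from $v$ to $w$ and one from $w$ to $v$. *)

theory Defs
  imports Main "HOL-Analysis.Analysis"
begin

definition adj :: "('v \<times> 'v) set \<Rightarrow> 'v \<Rightarrow> 'v \<Rightarrow> real" where
  "adj Phi v w = (if (v, w) \<in> Phi then 1 else 0)"

definition strongly_connected :: "('v \<times> 'v) set \<Rightarrow> bool" where
  "strongly_connected Phi \<longleftrightarrow> (\<forall>v w. (v, w) \<in> Phi\<^sup>* \<and> (w, v) \<in> Phi\<^sup>*)"

fun omega :: "('v::finite \<Rightarrow> 'v \<Rightarrow> real) \<Rightarrow> (nat \<Rightarrow> 'v \<Rightarrow> real) \<Rightarrow> nat \<Rightarrow> 'v \<Rightarrow> real" where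
  "omega W \<alpha> 0 v = 1"
| "omega W \<alpha> (Suc t) v =
     1 / (1 + \<alpha> t v + (\<Sum>w\<in>UNIV. W v w * (1 - omega W \<alpha> t w)))"

fun eta :: "('v::finite \<Rightarrow> 'v \<Rightarrow> real) \<Rightarrow> (nat \<Rightarrow> 'v \<Rightarrow> real) \<Rightarrow> (nat \<Rightarrow> 'v \<Rightarrow> real)
            \<Rightarrow> nat \<Rightarrow> 'v \<Rightarrow> real" where
  "eta M \<beta> \<omega> 0 v = 1"
| "eta M \<beta> \<omega> (Suc t) v =
     1 + \<beta> t v + (\<Sum>w\<in>UNIV. M v w * \<omega> t w * eta M \<beta> \<omega> t w)"

end

theory Submission
  imports Defs
begin

text \<open>
  The map defining \<open>\<omega>(t+1)\<close> from \<open>\<omega>(t)\<close> and \<open>\<alpha>(t)\<close> is monotone, so \<open>\<omega>\<close> decreases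
  and converges; a vertex with \<open>\<alpha>\<^sub>v(t) > 0\<close> has \<open>\<omega>\<^sub>v(t+1) < 1\<close>, and this propagates
  backwards along edges, so every limit is below 1.

  With \<open>W = diag(s)\<^sup>-\<^sup>1 M diag(s)\<close> and \<open>z = s (1 - \<omega>)\<close> the recursion for \<open>\<omega>\<close> reads
  \<open>\<omega>\<^sub>v(t+1) (M z(t))\<^sub>v = z\<^sub>v(t+1) - s\<^sub>v \<omega>\<^sub>v(t+1) \<alpha>\<^sub>v(t)\<close>. In the limit, \<open>z(\<infinity>) > 0\<close> is a
  subinvariant vector of \<open>B = diag(\<omega>(\<infinity>)) M\<close>, with slack wherever \<open>\<alpha>\<close> becomes positive
  or \<open>\<omega>(\<infinity>)\<close> vanishes. Strong connectivity spreads the slack to all vertices and yields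
  \<open>y > 0\<close> with \<open>B y \<le> \<gamma> y\<close> for some \<open>\<gamma> < 1\<close>. Now \<open>\<zeta> = \<omega> \<eta>\<close> obeys an affine recursion
  \<open>\<zeta>(t+1) = c(t) + B(t) \<zeta>(t)\<close> with \<open>B(t) \<rightarrow> B\<close>, which is eventually a contraction in the
  \<open>y\<close>-weighted sup norm, so \<open>\<zeta>\<close> and hence \<open>\<eta>\<close> converge.
\<close>

section \<open>Subinvariant vectors of nonnegative matrices\<close>

lemma rtrancl_crossing_edge:
  assumes "(a, b) \<in> R\<^sup>*" "a \<notin> S" "b \<in> S"
  shows "\<exists>u w. (u, w) \<in> R \<and> u \<notin> S \<and> w \<in> S"
  using assms by (induction rule: converse_rtrancl_induct) blast+

definition slack_vertices :: "('v::finite \<Rightarrow> 'v \<Rightarrow> real) \<Rightarrow> ('v \<Rightarrow> real) \<Rightarrow> 'v set" where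
  "slack_vertices B z = {v. (\<Sum>w\<in>UNIV. B v w * z w) < z v}"

lemma subinvariant_vector_spread_slack:
  fixes B :: "'v::finite \<Rightarrow> 'v \<Rightarrow> real"
  assumes B_nonneg: "\<And>v w. 0 \<le> B v w" and z_pos: "\<And>v. 0 < z v"
    and sub: "\<And>v. (\<Sum>w\<in>UNIV. B v w * z w) \<le> z v"
    and slack: "slack_vertices B z \<noteq> {}"
  obtains z' where "\<And>v. 0 < z' v" "\<And>v. (\<Sum>w\<in>UNIV. B v w * z' w) \<le> z' v"
    "slack_vertices B z \<subseteq> slack_vertices B z'"
    "\<And>v w. 0 < B v w \<Longrightarrow> w \<in> slack_vertices B z \<Longrightarrow> v \<in> slack_vertices B z'"
proof -
  define S where "S = slack_vertices B z"
  define gap where "gap v = z v - (\<Sum>w\<in>UNIV. B v w * z w)" for v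
  define \<epsilon> where "\<epsilon> = Min (gap ` S) / 2"
  define z' where "z' v = z v - (if v \<in> S then \<epsilon> else 0)" for v
  have gap_pos: "v \<in> S \<Longrightarrow> 0 < gap v" for v
    by (simp add: S_def slack_vertices_def gap_def)
  have gap_le: "gap v \<le> z v" for v
    using B_nonneg z_pos by (simp add: gap_def less_imp_le sum_nonneg)
  have \<epsilon>_pos: "0 < \<epsilon>"
    using slack gap_pos by (simp add: \<epsilon>_def S_def)
  have \<epsilon>_le: "v \<in> S \<Longrightarrow> 2 * \<epsilon> \<le> gap v" for v
    by (simp add: \<epsilon>_def)
  have Bz': "(\<Sum>w\<in>UNIV. B v w * z' w)
      = (\<Sum>w\<in>UNIV. B v w * z w) - \<epsilon> * (\<Sum>w\<in>S. B v w)" for v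
  proof -
    have "(\<Sum>w\<in>UNIV. B v w * (if w \<in> S then \<epsilon> else 0)) = \<epsilon> * (\<Sum>w\<in>S. B v w)"
      by (simp add: if_distrib sum.If_cases sum_distrib_left mult.commute)
    then show ?thesis
      by (simp add: z'_def right_diff_distrib sum_subtractf)
  qed
  have \<epsilon>_sum_nonneg: "0 \<le> \<epsilon> * (\<Sum>w\<in>S. B v w)" for v
    using B_nonneg \<epsilon>_pos by (simp add: sum_nonneg)
  have Bz'_le: "(\<Sum>w\<in>UNIV. B v w * z' w) \<le> (\<Sum>w\<in>UNIV. B v w * z w)" for v
    using \<epsilon>_sum_nonneg[of v] by (simp add: Bz')
  have slack_z': "(\<Sum>w\<in>UNIV. B v w * z' w) < z' v" if "v \<in> S" for v
    using Bz'_le[of v] \<epsilon>_le[of v] \<epsilon>_pos that by (simp add: z'_def gap_def)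
  show thesis
  proof
    show "0 < z' v" for v
      using z_pos[of v] gap_le[of v] \<epsilon>_le[of v] \<epsilon>_pos by (auto simp: z'_def)
    show "(\<Sum>w\<in>UNIV. B v w * z' w) \<le> z' v" for v
    proof (cases "v \<in> S")
      case True
      then show ?thesis using slack_z' by (simp add: less_imp_le)
    next
      case False
      then show ?thesis using Bz'_le[of v] sub[of v] by (simp add: z'_def)
    qed
    show "slack_vertices B z \<subseteq> slack_vertices B z'"
      using slack_z' by (auto simp: S_def slack_vertices_def)
    show "v \<in> slack_vertices B z'" if "0 < B v w" "w \<in> slack_vertices B z" for v w
    proof (cases "v \<in> S")
      case True
      then show ?thesis using slack_z' by (simp add: slack_vertices_def)
    next
      case False
      have "B v w \<le> (\<Sum>w\<in>S. B v w)"
        using that B_nonneg by (intro member_le_sum) (auto simp: S_def)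
      then have "0 < \<epsilon> * (\<Sum>w\<in>S. B v w)"
        using \<epsilon>_pos that by simp
      then show ?thesis
        unfolding slack_vertices_def mem_Collect_eq Bz' using sub[of v] False by (simp add: z'_def)
    qed
  qed
qed

lemma contracting_weights_of_subinvariant:
  fixes B :: "'v::finite \<Rightarrow> 'v \<Rightarrow> real"
  assumes B_nonneg: "\<And>v w. 0 \<le> B v w" and z_pos: "\<And>v. 0 < z v"
    and sub: "\<And>v. (\<Sum>w\<in>UNIV. B v w * z w) \<le> z v"
    and reach: "\<And>v. \<exists>u\<in>slack_vertices B z. (v, u) \<in> {(v, w). 0 < B v w}\<^sup>*"
  obtains y \<gamma> where "\<And>v. 0 < y v" "\<gamma> < 1" "\<And>v. (\<Sum>w\<in>UNIV. B v w * y w) \<le> \<gamma> * y v"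
proof -
  have "\<exists>y \<gamma>. (\<forall>v. 0 < y v) \<and> \<gamma> < 1 \<and> (\<forall>v. (\<Sum>w\<in>UNIV. B v w * y w) \<le> \<gamma> * y v)"
    if "card (- slack_vertices B z) = n" "\<And>v. 0 < z v" "\<And>v. (\<Sum>w\<in>UNIV. B v w * z w) \<le> z v"
      "\<And>v. \<exists>u\<in>slack_vertices B z. (v, u) \<in> {(v, w). 0 < B v w}\<^sup>*"
    for n z
    using that
  proof (induction n arbitrary: z rule: less_induct)
    case (less n z)
    show ?case
    proof (cases "slack_vertices B z = UNIV")
      case True
      define \<gamma> where "\<gamma> = Max (range (\<lambda>v. (\<Sum>w\<in>UNIV. B v w * z w) / z v))"
      have "\<gamma> \<in> range (\<lambda>v. (\<Sum>w\<in>UNIV. B v w * z w) / z v)"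
        unfolding \<gamma>_def by (rule Max_in) auto
      then obtain v where "\<gamma> = (\<Sum>w\<in>UNIV. B v w * z w) / z v"
        by blast
      moreover have "v \<in> slack_vertices B z"
        using True by simp
      ultimately have "\<gamma> < 1"
        using less.prems(2)[of v] by (simp add: slack_vertices_def)
      moreover have "(\<Sum>w\<in>UNIV. B v w * z w) \<le> \<gamma> * z v" for v
      proof -
        have "(\<Sum>w\<in>UNIV. B v w * z w) / z v \<le> \<gamma>"
          unfolding \<gamma>_def by (rule Max_ge) auto
        then show ?thesis
          using less.prems(2)[of v] by (simp add: pos_divide_le_eq mult.commute)
      qed
      ultimately show ?thesis
        using less.prems(2) by blast
    next
      case False
      then obtain a where "a \<notin> slack_vertices B z"
        by blast
      obtain u where u: "u \<in> slack_vertices B z" "(a, u) \<in> {(v, w). 0 < B v w}\<^sup>*"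
        using less.prems(4) by blast
      obtain p q where pq: "0 < B p q" "p \<notin> slack_vertices B z" "q \<in> slack_vertices B z"
        using rtrancl_crossing_edge[OF u(2) \<open>a \<notin> slack_vertices B z\<close> u(1)] by blast
      then have "slack_vertices B z \<noteq> {}"
        by blast
      then obtain z' where z': "\<And>v. 0 < z' v" "\<And>v. (\<Sum>w\<in>UNIV. B v w * z' w) \<le> z' v"
        "slack_vertices B z \<subseteq> slack_vertices B z'"
        "\<And>v w. 0 < B v w \<Longrightarrow> w \<in> slack_vertices B z \<Longrightarrow> v \<in> slack_vertices B z'"
        using subinvariant_vector_spread_slack[OF B_nonneg less.prems(2,3)] by blast
      have "p \<in> slack_vertices B z'"
        using z'(4) pq(1,3) .
      have "- slack_vertices B z' \<subset> - slack_vertices B z"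
        using z'(3) \<open>p \<in> slack_vertices B z'\<close> pq(2) by blast
      then have card_less: "card (- slack_vertices B z') < n"
        using less.prems(1) by (metis finite psubset_card_mono)
      have reach': "\<exists>u\<in>slack_vertices B z'. (v, u) \<in> {(v, w). 0 < B v w}\<^sup>*" for v
        using less.prems(4)[of v] z'(3) by blast
      show ?thesis
        by (rule less.IH[OF card_less refl z'(1,2) reach'])
    qed
  qed
  then show thesis
    using that z_pos sub reach by blast
qed

section \<open>Affine recursions with a contracting limit\<close>

lemma nonneg_affine_fixed_point:
  fixes B :: "'v::finite \<Rightarrow> 'v \<Rightarrow> real"
  assumes B_nonneg: "\<And>v w. 0 \<le> B v w" and c_nonneg: "\<And>v. 0 \<le> c v"
    and y_pos: "\<And>v. 0 < y v" and contr: "\<And>v. (\<Sum>w\<in>UNIV. B v w * y w) \<le> \<gamma> * y v"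
    and "\<gamma> < 1"
  obtains x where "\<And>v. x v = c v + (\<Sum>w\<in>UNIV. B v w * x w)"
proof -
  define F where "F x v = c v + (\<Sum>w\<in>UNIV. B v w * x w)" for x :: "'v \<Rightarrow> real" and v
  define x where "x k = (F ^^ k) (\<lambda>_. 0)" for k
  have x_Suc: "x (Suc k) = F (x k)" for k
    by (simp add: x_def)
  have F_mono: "F x v \<le> F x' v" if "\<And>w. x w \<le> x' w" for x x' v
    unfolding F_def using that B_nonneg by (simp add: sum_mono mult_left_mono)
  have x_inc: "x k v \<le> x (Suc k) v" for k v
  proof (induction k arbitrary: v)
    case 0
    then show ?case using c_nonneg by (simp add: x_def F_def)
  next
    case (Suc k)
    then show ?case by (simp only: x_Suc F_mono)
  qed
  define m where "m = Max (range (\<lambda>v. c v / y v))"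
  have m_ge: "c v / y v \<le> m" for v
    unfolding m_def by (rule Max_ge) auto
  have "0 \<le> m"
    using m_ge[of undefined] c_nonneg y_pos by (meson divide_nonneg_pos order_trans)
  define L where "L = m / (1 - \<gamma>)"
  have L_nonneg: "0 \<le> L"
    using \<open>0 \<le> m\<close> \<open>\<gamma> < 1\<close> by (simp add: L_def)
  have c_le: "c v \<le> (1 - \<gamma>) * L * y v" for v
    using m_ge[of v] y_pos[of v] \<open>\<gamma> < 1\<close> by (simp add: L_def pos_divide_le_eq)
  have x_le: "x k v \<le> L * y v" for k v
  proof (induction k arbitrary: v)
    case 0
    then show ?case using L_nonneg y_pos[of v] by (simp add: x_def)
  next
    case (Suc k)
    have "x (Suc k) v \<le> c v + (\<Sum>w\<in>UNIV. B v w * (L * y w))"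
      using F_mono[of "x k" "\<lambda>w. L * y w" v] Suc by (simp add: x_Suc F_def)
    also have "\<dots> = c v + L * (\<Sum>w\<in>UNIV. B v w * y w)"
      by (simp add: sum_distrib_left mult.left_commute)
    also have "\<dots> \<le> c v + L * (\<gamma> * y v)"
      using contr[of v] L_nonneg by (simp add: mult_left_mono)
    also have "\<dots> \<le> L * y v"
      using c_le[of v] by (simp add: algebra_simps)
    finally show ?case .
  qed
  have "\<exists>l. (\<lambda>k. x k v) \<longlonglongrightarrow> l" for v
    using incseq_convergent[of "\<lambda>k. x k v" "L * y v"] x_inc x_le
    by (meson incseq_SucI)
  then obtain xf where x_lim: "\<And>v. (\<lambda>k. x k v) \<longlonglongrightarrow> xf v"
    by metis
  have "xf v = F xf v" for v
  proof (rule LIMSEQ_unique)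
    show "(\<lambda>k. x (Suc k) v) \<longlonglongrightarrow> xf v"
      using x_lim by (rule LIMSEQ_Suc)
    show "(\<lambda>k. x (Suc k) v) \<longlonglongrightarrow> F xf v"
      unfolding x_Suc F_def by (intro tendsto_intros x_lim)
  qed
  then show thesis
    by (intro that) (simp add: F_def)
qed

lemma LIMSEQ_zero_of_perturbed_contraction:
  fixes E \<Delta> :: "nat \<Rightarrow> real"
  assumes E_nonneg: "\<And>t. 0 \<le> E t" and step: "\<And>t. E (Suc t) \<le> \<Delta> t + \<gamma> * E t"
    and \<Delta>: "\<Delta> \<longlonglongrightarrow> 0" and "0 \<le> \<gamma>" "\<gamma> < 1"
  shows "E \<longlonglongrightarrow> 0"
proof (rule LIMSEQ_I)
  fix e :: real assume "0 < e"
  then obtain N where N: "\<And>t. N \<le> t \<Longrightarrow> \<Delta> t < e * (1 - \<gamma>) / 2"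
    using LIMSEQ_D[OF \<Delta>, of "e * (1 - \<gamma>) / 2"] \<open>\<gamma> < 1\<close> by force
  have bound: "E (N + k) \<le> e / 2 + \<gamma> ^ k * E N" for k
  proof (induction k)
    case 0
    then show ?case using \<open>0 < e\<close> by simp
  next
    case (Suc k)
    have "E (N + Suc k) \<le> e * (1 - \<gamma>) / 2 + \<gamma> * (e / 2 + \<gamma> ^ k * E N)"
      using step[of "N + k"] N[of "N + k"] Suc \<open>0 \<le> \<gamma>\<close>
      by (smt (verit) mult_left_mono add_Suc_right le_add1)
    also have "\<dots> = e / 2 + \<gamma> ^ Suc k * E N"
      by (simp add: field_simps)
    finally show ?case .
  qed
  have "(\<lambda>k. \<gamma> ^ k * E N) \<longlonglongrightarrow> 0"
    using \<open>0 \<le> \<gamma>\<close> \<open>\<gamma> < 1\<close> by (simp add: LIMSEQ_power_zero tendsto_mult_left_zero)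
  then obtain K where K: "\<And>k. K \<le> k \<Longrightarrow> \<gamma> ^ k * E N < e / 2"
    using LIMSEQ_D[of _ 0 "e / 2"] \<open>0 < e\<close> by force
  have "\<bar>E n\<bar> < e" if "N + K \<le> n" for n
  proof -
    have "K \<le> n - N" "N + (n - N) = n"
      using that by auto
    then show ?thesis
      using bound[of "n - N"] K[of "n - N"] E_nonneg[of n] by simp
  qed
  then show "\<exists>n0. \<forall>n\<ge>n0. norm (E n - 0) < e"
    by (metis real_norm_def diff_zero)
qed

lemma affine_recursion_tendsto_fixed_point:
  fixes x c :: "nat \<Rightarrow> 'v::finite \<Rightarrow> real" and B :: "nat \<Rightarrow> 'v \<Rightarrow> 'v \<Rightarrow> real"
  assumes rec: "\<And>t v. x (Suc t) v = c t v + (\<Sum>w\<in>UNIV. B t v w * x t w)"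
    and c_lim: "\<And>v. (\<lambda>t. c t v) \<longlonglongrightarrow> c\<^sub>L v"
    and B_lim: "\<And>v w. (\<lambda>t. B t v w) \<longlonglongrightarrow> B\<^sub>L v w"
    and B_nonneg: "\<And>t v w. 0 \<le> B t v w" and y_pos: "\<And>v. 0 < y v"
    and contr: "\<And>t v. (\<Sum>w\<in>UNIV. B t v w * y w) \<le> \<gamma> * y v" and "0 \<le> \<gamma>" "\<gamma> < 1"
    and fixed: "\<And>v. xf v = c\<^sub>L v + (\<Sum>w\<in>UNIV. B\<^sub>L v w * xf w)"
  shows "(\<lambda>t. x t v) \<longlonglongrightarrow> xf v"
proof -
  define e where "e t v = x t v - xf v" for t v
  define E where "E t = Max (range (\<lambda>v. \<bar>e t v\<bar> / y v))" for t
  define \<delta> where "\<delta> t v = \<bar>c t v - c\<^sub>L v\<bar> + \<bar>\<Sum>w\<in>UNIV. (B t v w - B\<^sub>L v w) * xf w\<bar>" for t v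
  define \<Delta> where "\<Delta> t = (\<Sum>v\<in>UNIV. \<delta> t v / y v)" for t
  have e_le_E: "\<bar>e t v\<bar> \<le> E t * y v" for t v
  proof -
    have "\<bar>e t v\<bar> / y v \<le> E t"
      unfolding E_def by (rule Max_ge) auto
    then show ?thesis
      using y_pos[of v] by (simp add: pos_divide_le_eq)
  qed
  have E_nonneg: "0 \<le> E t" for t
  proof -
    have "0 \<le> E t * y undefined"
      using abs_ge_zero e_le_E by (rule order_trans)
    then show ?thesis
      using y_pos[of undefined] by (simp add: zero_le_mult_iff)
  qed
  have \<delta>_le_\<Delta>: "\<delta> t v / y v \<le> \<Delta> t" for t v
    unfolding \<Delta>_def using y_pos by (intro member_le_sum divide_nonneg_pos) (auto simp: \<delta>_def)
  have \<Delta>_lim: "\<Delta> \<longlonglongrightarrow> 0"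
  proof -
    have "\<Delta> \<longlonglongrightarrow> (\<Sum>v\<in>UNIV. (\<bar>c\<^sub>L v - c\<^sub>L v\<bar> + \<bar>\<Sum>w\<in>UNIV. (B\<^sub>L v w - B\<^sub>L v w) * xf w\<bar>) / y v)"
      unfolding \<Delta>_def \<delta>_def using y_pos
      by (intro tendsto_intros c_lim B_lim) (simp add: less_imp_neq[symmetric])
    then show ?thesis
      by simp
  qed
  have e_Suc: "e (Suc t) v = (c t v - c\<^sub>L v) + (\<Sum>w\<in>UNIV. (B t v w - B\<^sub>L v w) * xf w)
      + (\<Sum>w\<in>UNIV. B t v w * e t w)" for t v
    by (simp add: e_def rec fixed[of v] algebra_simps sum_subtractf sum.distrib)
  have "E (Suc t) \<le> \<Delta> t + \<gamma> * E t" for t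
    unfolding E_def[of "Suc t"]
  proof (rule Max.boundedI; clarify?)
    fix v
    have "\<bar>e (Suc t) v\<bar> \<le> \<delta> t v + (\<Sum>w\<in>UNIV. B t v w * \<bar>e t w\<bar>)"
      using sum_abs[of "\<lambda>w. B t v w * e t w" UNIV] B_nonneg
      unfolding e_Suc \<delta>_def by (simp add: abs_mult)
    also have "\<dots> \<le> \<delta> t v + (\<Sum>w\<in>UNIV. B t v w * (E t * y w))"
      using e_le_E B_nonneg by (intro add_left_mono sum_mono mult_left_mono) auto
    also have "\<dots> = \<delta> t v + E t * (\<Sum>w\<in>UNIV. B t v w * y w)"
      by (simp add: sum_distrib_left mult.left_commute)
    also have "\<dots> \<le> \<delta> t v + E t * (\<gamma> * y v)"
      using contr E_nonneg by (simp add: mult_left_mono)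
    finally have "\<bar>e (Suc t) v\<bar> / y v \<le> \<delta> t v / y v + \<gamma> * E t"
      using y_pos[of v] by (simp add: divide_le_eq algebra_simps)
    then show "\<bar>e (Suc t) v\<bar> / y v \<le> \<Delta> t + \<gamma> * E t"
      using \<delta>_le_\<Delta>[of t v] by linarith
  qed auto
  then have "E \<longlonglongrightarrow> 0"
    using LIMSEQ_zero_of_perturbed_contraction E_nonneg \<Delta>_lim \<open>0 \<le> \<gamma>\<close> \<open>\<gamma> < 1\<close> by blast
  then have "(\<lambda>t. E t * y v) \<longlonglongrightarrow> 0"
    by (simp add: tendsto_mult_left_zero)
  then have "(\<lambda>t. e t v) \<longlonglongrightarrow> 0"
    by (rule Lim_null_comparison[rotated]) (simp add: e_le_E)
  then show ?thesis
    by (simp add: e_def LIM_zero_iff)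
qed

lemma affine_recursion_convergent:
  fixes x c :: "nat \<Rightarrow> 'v::finite \<Rightarrow> real" and B :: "nat \<Rightarrow> 'v \<Rightarrow> 'v \<Rightarrow> real"
  assumes rec: "\<And>t v. x (Suc t) v = c t v + (\<Sum>w\<in>UNIV. B t v w * x t w)"
    and c_nonneg: "\<And>t v. 0 \<le> c t v" and c_lim: "\<And>v. (\<lambda>t. c t v) \<longlonglongrightarrow> c\<^sub>L v"
    and B_nonneg: "\<And>t v w. 0 \<le> B t v w" and B_lim: "\<And>v w. (\<lambda>t. B t v w) \<longlonglongrightarrow> B\<^sub>L v w"
    and y_pos: "\<And>v. 0 < y v" and contr: "\<And>v. (\<Sum>w\<in>UNIV. B\<^sub>L v w * y w) \<le> \<gamma> * y v"
    and "\<gamma> < 1"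
  shows "convergent (\<lambda>t. x t v)"
proof -
  have cL_nonneg: "0 \<le> c\<^sub>L v" for v
    by (rule LIMSEQ_le_const[OF c_lim]) (use c_nonneg in auto)
  have BL_nonneg: "0 \<le> B\<^sub>L v w" for v w
    by (rule LIMSEQ_le_const[OF B_lim]) (use B_nonneg in auto)
  obtain xf where fixed: "\<And>v. xf v = c\<^sub>L v + (\<Sum>w\<in>UNIV. B\<^sub>L v w * xf w)"
    using nonneg_affine_fixed_point[where B = B\<^sub>L and c = c\<^sub>L,
        OF BL_nonneg cL_nonneg y_pos contr \<open>\<gamma> < 1\<close>]
    by blast
  have "0 \<le> (\<Sum>w\<in>UNIV. B\<^sub>L undefined w * y w)"
    using BL_nonneg y_pos by (simp add: sum_nonneg less_imp_le)
  then have "0 \<le> \<gamma> * y undefined"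
    using contr[of undefined] by linarith
  then have "0 \<le> \<gamma>"
    using y_pos[of undefined] by (simp add: zero_le_mult_iff)
  define \<gamma>' where "\<gamma>' = (1 + \<gamma>) / 2"
  have "\<forall>\<^sub>F t in sequentially. (\<Sum>w\<in>UNIV. B t v w * y w) < \<gamma>' * y v" for v
  proof (rule order_tendstoD(2))
    show "(\<lambda>t. \<Sum>w\<in>UNIV. B t v w * y w) \<longlonglongrightarrow> (\<Sum>w\<in>UNIV. B\<^sub>L v w * y w)"
      by (intro tendsto_intros B_lim)
    have "\<gamma> * y v < y v"
      using y_pos[of v] \<open>\<gamma> < 1\<close> by simp
    then have "2 * (\<Sum>w\<in>UNIV. B\<^sub>L v w * y w) < y v + \<gamma> * y v"
      using contr[of v] by linarith
    then show "(\<Sum>w\<in>UNIV. B\<^sub>L v w * y w) < \<gamma>' * y v"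
      by (simp add: \<gamma>'_def field_simps)
  qed
  then have "\<forall>\<^sub>F t in sequentially. \<forall>v. (\<Sum>w\<in>UNIV. B t v w * y w) < \<gamma>' * y v"
    by (simp add: eventually_all_finite)
  then obtain T where T: "\<And>t v. T \<le> t \<Longrightarrow> (\<Sum>w\<in>UNIV. B t v w * y w) < \<gamma>' * y v"
    unfolding eventually_sequentially by blast
  have "(\<lambda>t. x (t + T) v) \<longlonglongrightarrow> xf v"
  proof (rule affine_recursion_tendsto_fixed_point[OF _ _ _ _ y_pos _ _ _ fixed])
    show "x (Suc t + T) v = c (t + T) v + (\<Sum>w\<in>UNIV. B (t + T) v w * x (t + T) w)" for t v
      by (simp add: rec)
    show "(\<lambda>t. c (t + T) v) \<longlonglongrightarrow> c\<^sub>L v" for v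
      using c_lim by (rule LIMSEQ_ignore_initial_segment)
    show "(\<lambda>t. B (t + T) v w) \<longlonglongrightarrow> B\<^sub>L v w" for v w
      using B_lim by (rule LIMSEQ_ignore_initial_segment)
    show "(\<Sum>w\<in>UNIV. B (t + T) v w * y w) \<le> \<gamma>' * y v" for t v
      using T[of "t + T" v] by simp
  qed (use B_nonneg \<open>0 \<le> \<gamma>\<close> \<open>\<gamma> < 1\<close> in \<open>auto simp: \<gamma>'_def\<close>)
  then show ?thesis
    by (auto simp: convergent_def dest: LIMSEQ_offset)
qed

section \<open>Convergence of \<open>\<omega>\<close> and \<open>\<eta>\<close>\<close>

lemma omega_pos_le_one:
  fixes W :: "'v::finite \<Rightarrow> 'v \<Rightarrow> real"
  assumes W_nonneg: "\<And>v w. 0 \<le> W v w" and alpha_nonneg: "\<And>t v. 0 \<le> \<alpha> t v"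
  shows "0 < omega W \<alpha> t v \<and> omega W \<alpha> t v \<le> 1"
proof (induction t arbitrary: v)
  case 0
  then show ?case by simp
next
  case (Suc t)
  have "0 \<le> (\<Sum>w\<in>UNIV. W v w * (1 - omega W \<alpha> t w))"
    using Suc W_nonneg by (intro sum_nonneg) simp
  then show ?case
    using alpha_nonneg[of t v] by simp
qed

lemma omega_decseq:
  fixes W :: "'v::finite \<Rightarrow> 'v \<Rightarrow> real"
  assumes W_nonneg: "\<And>v w. 0 \<le> W v w" and alpha_nonneg: "\<And>t v. 0 \<le> \<alpha> t v"
    and alpha_incseq: "\<And>v. incseq (\<lambda>t. \<alpha> t v)"
  shows "decseq (\<lambda>t. omega W \<alpha> t v)"
proof (rule decseq_SucI)
  have bounds: "0 < omega W \<alpha> t v \<and> omega W \<alpha> t v \<le> 1" for t v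
    using W_nonneg alpha_nonneg by (rule omega_pos_le_one)
  show "omega W \<alpha> (Suc t) v \<le> omega W \<alpha> t v" for t
  proof (induction t arbitrary: v)
    case 0
    then show ?case using bounds[of "Suc 0" v] by simp
  next
    case (Suc t)
    have "(\<Sum>w\<in>UNIV. W v w * (1 - omega W \<alpha> t w))
        \<le> (\<Sum>w\<in>UNIV. W v w * (1 - omega W \<alpha> (Suc t) w))"
      using Suc W_nonneg by (intro sum_mono mult_left_mono) auto
    moreover have "0 \<le> (\<Sum>w\<in>UNIV. W v w * (1 - omega W \<alpha> t w))"
      using bounds W_nonneg by (intro sum_nonneg) simp
    moreover have "\<alpha> t v \<le> \<alpha> (Suc t) v"
      using alpha_incseq by (simp add: incseq_Suc_iff)
    ultimately show ?case
      using alpha_nonneg[of t v]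
      by (simp only: omega.simps) (rule divide_left_mono; simp add: add_pos_nonneg)
  qed
qed

lemma omega_tendsto_lim:
  fixes W :: "'v::finite \<Rightarrow> 'v \<Rightarrow> real"
  assumes W_nonneg: "\<And>v w. 0 \<le> W v w" and alpha_nonneg: "\<And>t v. 0 \<le> \<alpha> t v"
    and alpha_incseq: "\<And>v. incseq (\<lambda>t. \<alpha> t v)"
  shows "(\<lambda>t. omega W \<alpha> t v) \<longlonglongrightarrow> lim (\<lambda>t. omega W \<alpha> t v)"
proof -
  have "decseq (\<lambda>t. omega W \<alpha> t v)"
    using W_nonneg alpha_nonneg alpha_incseq by (rule omega_decseq)
  moreover have "0 \<le> omega W \<alpha> t v" for t
    using omega_pos_le_one[of W \<alpha> t v] W_nonneg alpha_nonneg by (simp add: less_imp_le)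
  ultimately obtain L where "(\<lambda>t. omega W \<alpha> t v) \<longlonglongrightarrow> L"
    using decseq_convergent[of _ 0] by blast
  then show ?thesis
    by (simp add: limI)
qed

lemma omega_lim_less_one:
  fixes W :: "'v::finite \<Rightarrow> 'v \<Rightarrow> real"
  assumes W_nonneg: "\<And>v w. 0 \<le> W v w" and alpha_nonneg: "\<And>t v. 0 \<le> \<alpha> t v"
    and alpha_incseq: "\<And>v. incseq (\<lambda>t. \<alpha> t v)"
    and reach: "\<And>v. \<exists>u t. 0 < \<alpha> t u \<and> (v, u) \<in> {(v, w). 0 < W v w}\<^sup>*"
  shows "lim (\<lambda>t. omega W \<alpha> t v) < 1"
proof -
  have bounds: "0 < omega W \<alpha> t v \<and> omega W \<alpha> t v \<le> 1" for t v
    using W_nonneg alpha_nonneg by (rule omega_pos_le_one)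
  obtain u t0 where u: "0 < \<alpha> t0 u" and path: "(v, u) \<in> {(v, w). 0 < W v w}\<^sup>*"
    using reach by blast
  from path have "\<exists>T. omega W \<alpha> T v < 1"
  proof (induction rule: converse_rtrancl_induct)
    case base
    have "0 \<le> (\<Sum>w\<in>UNIV. W u w * (1 - omega W \<alpha> t0 w))"
      using bounds W_nonneg by (intro sum_nonneg) simp
    then have "omega W \<alpha> (Suc t0) u < 1"
      using u by simp
    then show ?case ..
  next
    case (step v w)
    then obtain T where T: "omega W \<alpha> T w < 1"
      by blast
    have "0 < (\<Sum>x\<in>UNIV. W v x * (1 - omega W \<alpha> T x))"
      using bounds W_nonneg T step(1) by (intro sum_pos2[of UNIV w]) auto
    then have "omega W \<alpha> (Suc T) v < 1"
      using alpha_nonneg[of T v] by simp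
    then show ?case ..
  qed
  then obtain T where "omega W \<alpha> T v < 1" ..
  moreover have "decseq (\<lambda>t. omega W \<alpha> t v)"
    using W_nonneg alpha_nonneg alpha_incseq by (rule omega_decseq)
  moreover have "(\<lambda>t. omega W \<alpha> t v) \<longlonglongrightarrow> lim (\<lambda>t. omega W \<alpha> t v)"
    using W_nonneg alpha_nonneg alpha_incseq by (rule omega_tendsto_lim)
  ultimately show ?thesis
    using decseq_ge by (metis le_less_trans)
qed

locale omega_eta_system =
  fixes M :: "'v::finite \<Rightarrow> 'v \<Rightarrow> real" and s :: "'v \<Rightarrow> real"
    and \<alpha> \<beta> :: "nat \<Rightarrow> 'v \<Rightarrow> real"
  assumes M_nonneg: "0 \<le> M v w" and s_pos: "0 < s v"
    and alpha_nonneg: "0 \<le> \<alpha> t v" and alpha_incseq: "incseq (\<lambda>t. \<alpha> t v)"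
    and beta_nonneg: "0 \<le> \<beta> t v" and beta_convergent: "convergent (\<lambda>t. \<beta> t v)"
    and reaches_alpha_pos: "\<exists>u t. 0 < \<alpha> t u \<and> (v, u) \<in> {(v, w). 0 < M v w}\<^sup>*"
begin

definition W :: "'v \<Rightarrow> 'v \<Rightarrow> real" where
  "W v w = M v w * s w / s v"

abbreviation \<omega> :: "nat \<Rightarrow> 'v \<Rightarrow> real" where
  "\<omega> \<equiv> omega W \<alpha>"

definition omega_limit :: "'v \<Rightarrow> real" where
  "omega_limit v = lim (\<lambda>t. \<omega> t v)"

definition z :: "nat \<Rightarrow> 'v \<Rightarrow> real" where
  "z t v = s v * (1 - \<omega> t v)"

definition z_limit :: "'v \<Rightarrow> real" where
  "z_limit v = s v * (1 - omega_limit v)"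

lemma W_nonneg: "0 \<le> W v w"
  using M_nonneg s_pos by (simp add: W_def less_imp_le)

lemma W_pos_iff: "0 < W v w \<longleftrightarrow> 0 < M v w"
  using s_pos[of v] s_pos[of w] by (simp add: W_def zero_less_divide_iff zero_less_mult_iff)

lemma omega_bounds: "0 < \<omega> t v \<and> \<omega> t v \<le> 1"
  using W_nonneg alpha_nonneg by (rule omega_pos_le_one)

lemma omega_antimono: "decseq (\<lambda>t. \<omega> t v)"
  using W_nonneg alpha_nonneg alpha_incseq by (rule omega_decseq)

lemma reaches_alpha_pos_W: "\<exists>u t. 0 < \<alpha> t u \<and> (v, u) \<in> {(v, w). 0 < W v w}\<^sup>*"
  using reaches_alpha_pos by (simp add: W_pos_iff)

lemma omega_tendsto: "(\<lambda>t. \<omega> t v) \<longlonglongrightarrow> omega_limit v"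
  unfolding omega_limit_def
  using W_nonneg alpha_nonneg alpha_incseq by (rule omega_tendsto_lim)

lemma omega_limit_less_one: "omega_limit v < 1"
  unfolding omega_limit_def
  using W_nonneg alpha_nonneg alpha_incseq reaches_alpha_pos_W by (rule omega_lim_less_one)

lemma omega_limit_nonneg: "0 \<le> omega_limit v"
  by (rule LIMSEQ_le_const[OF omega_tendsto]) (use omega_bounds less_imp_le in blast)

lemma z_limit_pos: "0 < z_limit v"
  using s_pos[of v] omega_limit_less_one[of v] by (simp add: z_limit_def)

lemma z_tendsto: "(\<lambda>t. z t v) \<longlonglongrightarrow> z_limit v"
  unfolding z_def z_limit_def by (intro tendsto_intros omega_tendsto)

text \<open>Multiplying the recursion for \<open>\<omega>\<close> by \<open>s v * \<omega> (Suc t) v\<close> turns it into a linear identity.\<close>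

lemma omega_Suc_flux:
  "\<omega> (Suc t) v * (\<Sum>w\<in>UNIV. M v w * z t w) = z (Suc t) v - s v * \<omega> (Suc t) v * \<alpha> t v"
proof -
  define P where "P = (\<Sum>w\<in>UNIV. M v w * z t w)"
  have "0 \<le> P"
    unfolding P_def z_def using M_nonneg s_pos omega_bounds
    by (intro sum_nonneg mult_nonneg_nonneg) (auto simp: less_imp_le)
  have sum_W: "(\<Sum>w\<in>UNIV. W v w * (1 - \<omega> t w)) = P / s v"
    unfolding P_def z_def W_def by (simp add: sum_divide_distrib ac_simps)
  define D where "D = 1 + \<alpha> t v + P / s v"
  have D_pos: "0 < D"
    using \<open>0 \<le> P\<close> s_pos[of v] alpha_nonneg[of t v] by (simp add: D_def add_pos_nonneg)
  have omega_Suc: "\<omega> (Suc t) v = 1 / D"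
    using sum_W by (simp add: D_def)
  have "P = s v * D - s v - s v * \<alpha> t v"
    using s_pos[of v] by (simp add: D_def field_simps)
  then have "1 / D * P = (s v * D - s v - s v * \<alpha> t v) / D"
    by simp
  also have "\<dots> = s v * (1 - 1 / D) - s v * (1 / D) * \<alpha> t v"
    using D_pos by (simp add: field_simps)
  finally have "1 / D * P = s v * (1 - 1 / D) - s v * (1 / D) * \<alpha> t v" .
  then show ?thesis
    by (simp only: P_def z_def[of "Suc t" v] omega_Suc)
qed

lemma omega_limit_subinvariant:
  "omega_limit v * (\<Sum>w\<in>UNIV. M v w * z_limit w) \<le> z_limit v - s v * omega_limit v * \<alpha> t v"
proof (rule LIMSEQ_le)
  show "(\<lambda>t'. \<omega> (Suc t') v * (\<Sum>w\<in>UNIV. M v w * z t' w))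
      \<longlonglongrightarrow> omega_limit v * (\<Sum>w\<in>UNIV. M v w * z_limit w)"
    by (intro tendsto_intros z_tendsto LIMSEQ_Suc[OF omega_tendsto])
  show "(\<lambda>t'. z (Suc t') v - s v * \<omega> (Suc t') v * \<alpha> t v)
      \<longlonglongrightarrow> z_limit v - s v * omega_limit v * \<alpha> t v"
    by (intro tendsto_intros LIMSEQ_Suc[OF z_tendsto] LIMSEQ_Suc[OF omega_tendsto])
  have "\<omega> (Suc t') v * (\<Sum>w\<in>UNIV. M v w * z t' w) \<le> z (Suc t') v - s v * \<omega> (Suc t') v * \<alpha> t v"
    if "t \<le> t'" for t'
  proof -
    have "\<alpha> t v \<le> \<alpha> t' v"
      using alpha_incseq that by (simp add: incseq_def)
    moreover have "0 \<le> s v * \<omega> (Suc t') v"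
      using s_pos[of v] omega_bounds[of "Suc t'" v] by (meson less_imp_le mult_nonneg_nonneg)
    ultimately have "s v * \<omega> (Suc t') v * \<alpha> t v \<le> s v * \<omega> (Suc t') v * \<alpha> t' v"
      by (rule mult_left_mono)
    then show ?thesis
      unfolding omega_Suc_flux by linarith
  qed
  then show "\<exists>N. \<forall>t'\<ge>N. \<omega> (Suc t') v * (\<Sum>w\<in>UNIV. M v w * z t' w)
      \<le> z (Suc t') v - s v * \<omega> (Suc t') v * \<alpha> t v"
    by blast
qed

definition limit_matrix :: "'v \<Rightarrow> 'v \<Rightarrow> real" where
  "limit_matrix v w = omega_limit v * M v w"

lemma limit_matrix_nonneg: "0 \<le> limit_matrix v w"
  using omega_limit_nonneg M_nonneg by (simp add: limit_matrix_def)

lemma limit_matrix_times: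
  "(\<Sum>w\<in>UNIV. limit_matrix v w * y w) = omega_limit v * (\<Sum>w\<in>UNIV. M v w * y w)"
  by (simp add: limit_matrix_def sum_distrib_left mult.assoc)

lemma z_limit_subinvariant: "(\<Sum>w\<in>UNIV. limit_matrix v w * z_limit w) \<le> z_limit v"
proof -
  have "0 \<le> s v * omega_limit v * \<alpha> 0 v"
    using s_pos[of v] omega_limit_nonneg[of v] alpha_nonneg[of 0 v] by simp
  then show ?thesis
    unfolding limit_matrix_times using omega_limit_subinvariant[of v 0] by linarith
qed

lemma slack_if_omega_limit_zero:
  assumes "omega_limit v = 0"
  shows "v \<in> slack_vertices limit_matrix z_limit"
  using assms z_limit_pos[of v] by (simp add: slack_vertices_def limit_matrix_def)

lemma slack_if_alpha_pos:
  assumes "0 < \<alpha> t v"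
  shows "v \<in> slack_vertices limit_matrix z_limit"
proof (cases "omega_limit v = 0")
  case True
  then show ?thesis by (rule slack_if_omega_limit_zero)
next
  case False
  then have "0 < s v * omega_limit v * \<alpha> t v"
    using s_pos[of v] omega_limit_nonneg[of v] assms by simp
  then show ?thesis
    using omega_limit_subinvariant[of v t] by (simp add: slack_vertices_def limit_matrix_times)
qed

lemma reaches_slack:
  "\<exists>u\<in>slack_vertices limit_matrix z_limit.
     (v, u) \<in> {(v, w). 0 < limit_matrix v w}\<^sup>*"
proof -
  obtain u t where "0 < \<alpha> t u" and path: "(v, u) \<in> {(v, w). 0 < M v w}\<^sup>*"
    using reaches_alpha_pos by blast
  from path show ?thesis
  proof (induction rule: converse_rtrancl_induct)
    case base
    then show ?case using slack_if_alpha_pos[OF \<open>0 < \<alpha> t u\<close>] by blast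
  next
    case (step v w)
    show ?case
    proof (cases "omega_limit v = 0")
      case True
      then show ?thesis using slack_if_omega_limit_zero by blast
    next
      case False
      then have "0 < limit_matrix v w"
        using step(1) omega_limit_nonneg[of v] by (simp add: limit_matrix_def)
      then show ?thesis
        using step(3) by (blast intro: converse_rtrancl_into_rtrancl)
    qed
  qed
qed

lemma limit_matrix_contracting_weights:
  obtains y \<gamma> where "\<And>v. 0 < y v" "\<gamma> < 1" "\<And>v. (\<Sum>w\<in>UNIV. limit_matrix v w * y w) \<le> \<gamma> * y v"
  using contracting_weights_of_subinvariant[where B = limit_matrix and z = z_limit,
      OF limit_matrix_nonneg z_limit_pos z_limit_subinvariant reaches_slack] that
  by blast

lemma eta_convergent: "convergent (\<lambda>t. eta M \<beta> \<omega> t v)"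
proof -
  obtain y \<gamma> where y_pos: "\<And>v. 0 < y v" and "\<gamma> < 1"
    and contr: "\<And>v. (\<Sum>w\<in>UNIV. limit_matrix v w * y w) \<le> \<gamma> * y v"
    using limit_matrix_contracting_weights by blast
  obtain \<beta>\<^sub>L where \<beta>_lim: "\<And>v. (\<lambda>t. \<beta> t v) \<longlonglongrightarrow> \<beta>\<^sub>L v"
    using beta_convergent unfolding convergent_def by metis
  define \<zeta> where "\<zeta> t v = \<omega> t v * eta M \<beta> \<omega> t v" for t v
  have "convergent (\<lambda>t. \<zeta> t v)" for v
  proof (rule affine_recursion_convergent[OF _ _ _ _ _ y_pos contr \<open>\<gamma> < 1\<close>])
    show "\<zeta> (Suc t) v = \<omega> (Suc t) v * (1 + \<beta> t v) + (\<Sum>w\<in>UNIV. \<omega> (Suc t) v * M v w * \<zeta> t w)"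
      for t v
      unfolding \<zeta>_def eta.simps(2) by (simp only: distrib_left sum_distrib_left mult.assoc)
    show "0 \<le> \<omega> (Suc t) v * (1 + \<beta> t v)" for t v
      using omega_bounds[of "Suc t" v] beta_nonneg[of t v] by (simp del: omega.simps)
    show "(\<lambda>t. \<omega> (Suc t) v * (1 + \<beta> t v)) \<longlonglongrightarrow> omega_limit v * (1 + \<beta>\<^sub>L v)" for v
      by (intro tendsto_intros LIMSEQ_Suc[OF omega_tendsto] \<beta>_lim)
    show "0 \<le> \<omega> (Suc t) v * M v w" for t v w
      using omega_bounds[of "Suc t" v] M_nonneg[of v w] by (simp del: omega.simps)
    show "(\<lambda>t. \<omega> (Suc t) v * M v w) \<longlonglongrightarrow> limit_matrix v w" for v w
      unfolding limit_matrix_def by (intro tendsto_intros LIMSEQ_Suc[OF omega_tendsto])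
  qed
  then obtain \<zeta>\<^sub>L where \<zeta>_lim: "\<And>v. (\<lambda>t. \<zeta> t v) \<longlonglongrightarrow> \<zeta>\<^sub>L v"
    unfolding convergent_def by metis
  have "(\<lambda>t. eta M \<beta> \<omega> (Suc t) v) \<longlonglongrightarrow> 1 + \<beta>\<^sub>L v + (\<Sum>w\<in>UNIV. M v w * \<zeta>\<^sub>L w)"
    unfolding eta.simps(2) mult.assoc \<zeta>_def[symmetric] by (intro tendsto_intros \<beta>_lim \<zeta>_lim)
  then have "convergent (\<lambda>t. eta M \<beta> \<omega> (Suc t) v)"
    by (rule convergentI)
  then show ?thesis
    by (rule convergent_Suc_iff[THEN iffD1])
qed

end

theorem lemma4:
  fixes Phi :: "('v::finite \<times> 'v) set"
    and \<alpha> \<beta> :: "nat \<Rightarrow> 'v \<Rightarrow> real"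
    and r s :: "'v \<Rightarrow> real"
  assumes alpha_nonneg: "\<forall>t v. \<alpha> t v \<ge> 0"
    and beta_nonneg: "\<forall>t v. \<beta> t v \<ge> 0"
    and alpha_mono: "\<forall>v. incseq (\<lambda>t. \<alpha> t v)"
    and beta_conv: "\<forall>v. convergent (\<lambda>t. \<beta> t v)"
    and r_pos: "\<forall>v. r v > 0" and s_pos: "\<forall>v. s v > 0"
    and rs: "\<forall>v. r v = inverse (s v)"
    and sc: "strongly_connected Phi"
    and alpha_nz: "\<exists>v t. \<alpha> t v \<noteq> 0"
  defines "M \<equiv> adj Phi"
    and "W \<equiv> (\<lambda>v w. r v * adj Phi v w * s w)"
  shows "(\<forall>v. convergent (\<lambda>t. omega W \<alpha> t v))
       \<and> (\<forall>v. convergent (\<lambda>t. eta M \<beta> (omega W \<alpha>) t v))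
       \<and> (\<forall>u. antimono (\<lambda>t. omega W \<alpha> t u))
       \<and> (\<forall>u. lim (\<lambda>t. omega W \<alpha> t u) < 1)"
proof -
  have adj_edges: "{(v, w). 0 < adj Phi v w} = Phi"
    by (auto simp: adj_def)
  interpret sys: omega_eta_system M s \<alpha> \<beta>
  proof
    fix v
    obtain u t where "\<alpha> t u \<noteq> 0"
      using alpha_nz by blast
    then have "0 < \<alpha> t u"
      using alpha_nonneg by (metis less_eq_real_def)
    moreover have "(v, u) \<in> {(v, w). 0 < M v w}\<^sup>*"
      using sc by (simp add: M_def adj_edges strongly_connected_def)
    ultimately show "\<exists>u t. 0 < \<alpha> t u \<and> (v, u) \<in> {(v, w). 0 < M v w}\<^sup>*"
      by blast
  qed (use alpha_nonneg beta_nonneg alpha_mono beta_conv s_pos in \<open>auto simp: M_def adj_def\<close>)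
  have W_eq: "W = omega_eta_system.W M s"
    unfolding W_def by (intro ext) (unfold sys.W_def, simp add: rs M_def divide_inverse ac_simps)
  show ?thesis
    unfolding W_eq
    using convergentI[OF sys.omega_tendsto] sys.eta_convergent sys.omega_antimono
      sys.omega_limit_less_one
    unfolding sys.omega_limit_def by blast
qed

end
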